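(* Let $\mathcal{G}$ be a finite groupoid and let $\mathcal{H}$ be a connected wide subgroupoid of $\mathcal{G}$. Then $\mathbb{C}[\mathcal{G}/\mathcal{H}]\cong\mathrm{Ind}^\mathcal{G}_\mathcal{H}\mathrm{Tri}$ as functors $\mathcal{G}\to\mathbf{vect}$.
   Context: A groupoid is a category in which every morphism is invertible; all groupoids are finite and nonempty; $gg'$ denotes composition. A subgroupoid is wide if it contains all objects, connected if any two of its objects are joined by one of its morphisms. For $x\in\mathcal{G}_0$ let $\mathrm{Mor}_\mathcal{G}(-,x):=\coprod_{y\in\mathcal{G}_0}\mathcal{G}(y,x)$, with the equivalence relation $a\sim_{\mathcal{H},x}b\iff a^{-1}b\in\mathcal{H}_1$; write $a\mathcal{H}$ for the class of $a$. The $\mathcal{G}$-set $\mathcal{G}/\mathcal{H}:\mathcal{G}\to\mathbf{set}$ sends $x$ to $\mathrm{Mor}_\mathcal{G}(-,x)/\sim_{\mathcal{H},x}$ and $g:x\to y$ to $a\mathcal{H}\mapsto ga\mathcal{H}$. $\mathbf{vect}$ is the category of finite-dimensional complex vector spaces; $F:\mathbf{set}\to\mathbf{vect}$ is the free vector space functor (left adjoint of the forgetful functor), and for a $\mathcal{G}$-set $X$, $\mathbb{C}[X]:=F\circ X$. $\mathrm{Tri}:\mathcal{H}\to\mathbf{vect}$ is the trivial representation ($x\mapsto\mathbb{C}$, morphisms $\mapsto\mathrm{id}_\mathbb{C}$), and $\mathrm{Ind}^\mathcal{G}_\mathcal{H}:\mathbf{vect}^\mathcal{H}\to\mathbf{vect}^\mathcal{G}$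 is the left adjoint of restriction along the inclusion $\mathcal{H}\hookrightarrow\mathcal{G}$ (left Kan extension along the inclusion). *)

theory Defs
  imports Complex_Main "Jordan_Normal_Form.Matrix"
begin

text \<open>A (small) category presented by its object set, arrow set, source, target,
  composition and identities.  comp g h is the composite gh (first h, then g),
  defined when dom g = cod h.\<close>

record ('o, 'm) groupoid =
  Obj  :: "'o set"
  Arr  :: "'m set"
  dom  :: "'m \<Rightarrow> 'o"
  cod  :: "'m \<Rightarrow> 'o"
  comp :: "'m \<Rightarrow> 'm \<Rightarrow> 'm"
  ide  :: "'o \<Rightarrow> 'm"

definition is_finite_groupoid :: "('o, 'm) groupoid \<Rightarrow> bool" where
  "is_finite_groupoid G \<longleftrightarrow>
     finite (Obj G) \<and> finite (Arr G) \<and> Obj G \<noteq> {} \<and>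
     (\<forall>g\<in>Arr G. dom G g \<in> Obj G \<and> cod G g \<in> Obj G) \<and>
     (\<forall>x\<in>Obj G. ide G x \<in> Arr G \<and> dom G (ide G x) = x \<and> cod G (ide G x) = x) \<and>
     (\<forall>g\<in>Arr G. \<forall>h\<in>Arr G. dom G g = cod G h \<longrightarrow>
        comp G g h \<in> Arr G \<and> dom G (comp G g h) = dom G h \<and> cod G (comp G g h) = cod G g) \<and>
     (\<forall>g\<in>Arr G. \<forall>h\<in>Arr G. \<forall>k\<in>Arr G. dom G g = cod G h \<longrightarrow> dom G h = cod G k \<longrightarrow>
        comp G (comp G g h) k = comp G g (comp G h k)) \<and>
     (\<forall>g\<in>Arr G. comp G (ide G (cod G g)) g = g \<and> comp G g (ide G (dom G g)) = g) \<and>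
     (\<forall>g\<in>Arr G. \<exists>h\<in>Arr G. dom G h = cod G g \<and> cod G h = dom G g \<and>
        comp G h g = ide G (dom G g) \<and> comp G g h = ide G (cod G g))"

definition ginv :: "('o, 'm) groupoid \<Rightarrow> 'm \<Rightarrow> 'm" where
  "ginv G g = (THE h. h \<in> Arr G \<and> dom G h = cod G g \<and> cod G h = dom G g \<and>
        comp G h g = ide G (dom G g) \<and> comp G g h = ide G (cod G g))"

text \<open>A subgroupoid is given by its set of arrows S (its objects are the
  sources/targets of its arrows).\<close>

definition is_subgroupoid :: "('o, 'm) groupoid \<Rightarrow> 'm set \<Rightarrow> bool" where
  "is_subgroupoid G S \<longleftrightarrow> S \<subseteq> Arr G \<and>
     (\<forall>h\<in>S. ide G (dom G h) \<in> S \<and> ide G (cod G h) \<in> S) \<and>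
     (\<forall>g\<in>S. \<forall>h\<in>S. dom G g = cod G h \<longrightarrow> comp G g h \<in> S) \<and>
     (\<forall>h\<in>S. ginv G h \<in> S)"

definition is_wide_subgroupoid :: "('o, 'm) groupoid \<Rightarrow> 'm set \<Rightarrow> bool" where
  "is_wide_subgroupoid G S \<longleftrightarrow> is_subgroupoid G S \<and> (\<forall>x\<in>Obj G. ide G x \<in> S)"

definition sub_objects :: "('o, 'm) groupoid \<Rightarrow> 'm set \<Rightarrow> 'o set" where
  "sub_objects G S = dom G ` S \<union> cod G ` S"

definition is_connected_subgroupoid :: "('o, 'm) groupoid \<Rightarrow> 'm set \<Rightarrow> bool" where
  "is_connected_subgroupoid G S \<longleftrightarrow> is_subgroupoid G S \<and>
     (\<forall>x\<in>sub_objects G S. \<forall>y\<in>sub_objects G S. \<exists>h\<in>S. dom G h = x \<and> cod G h = y)"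

definition Mor_to :: "('o, 'm) groupoid \<Rightarrow> 'o \<Rightarrow> 'm set" where
  "Mor_to G x = {a \<in> Arr G. cod G a = x}"

definition left_class :: "('o, 'm) groupoid \<Rightarrow> 'm set \<Rightarrow> 'o \<Rightarrow> 'm \<Rightarrow> 'm set" where
  "left_class G S x a = {b \<in> Mor_to G x. comp G (ginv G a) b \<in> S}"

definition quot_set :: "('o, 'm) groupoid \<Rightarrow> 'm set \<Rightarrow> 'o \<Rightarrow> 'm set set" where
  "quot_set G S x = left_class G S x ` Mor_to G x"

text \<open>Action of g : x -> y on classes: aH |-> gaH (which is the image g.(aH)).\<close>
definition quot_act :: "('o, 'm) groupoid \<Rightarrow> 'm set \<Rightarrow> 'm \<Rightarrow> 'm set \<Rightarrow> 'm set" where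
  "quot_act G S g c = left_class G S (cod G g) (comp G g (SOME a. a \<in> c))"

text \<open>vect is modelled by its skeleton: a finite-dimensional complex vector space is
  C^n (given by n), a linear map C^n -> C^m is an m x n complex matrix.  A
  representation of the groupoid restricted to arrow set A (A = Arr G for G,
  A = S for a wide subgroupoid H) assigns a dimension to every object and a
  matrix to every arrow, functorially.\<close>

definition is_rep :: "('o, 'm) groupoid \<Rightarrow> 'm set \<Rightarrow> ('o \<Rightarrow> nat) \<Rightarrow> ('m \<Rightarrow> complex mat) \<Rightarrow> bool" where
  "is_rep G A d \<rho> \<longleftrightarrow>
     (\<forall>g\<in>A. \<rho> g \<in> carrier_mat (d (cod G g)) (d (dom G g))) \<and>
     (\<forall>x\<in>Obj G. ide G x \<in> A \<longrightarrow> \<rho> (ide G x) = 1\<^sub>m (d x)) \<and>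
     (\<forall>g\<in>A. \<forall>h\<in>A. dom G g = cod G h \<longrightarrow> \<rho> (comp G g h) = \<rho> g * \<rho> h)"

definition is_nat_trans :: "('o, 'm) groupoid \<Rightarrow> 'm set \<Rightarrow> ('o \<Rightarrow> nat) \<Rightarrow> ('m \<Rightarrow> complex mat)
    \<Rightarrow> ('o \<Rightarrow> nat) \<Rightarrow> ('m \<Rightarrow> complex mat) \<Rightarrow> ('o \<Rightarrow> complex mat) \<Rightarrow> bool" where
  "is_nat_trans G A d1 \<rho>1 d2 \<rho>2 \<tau> \<longleftrightarrow>
     (\<forall>x\<in>Obj G. \<tau> x \<in> carrier_mat (d2 x) (d1 x)) \<and>
     (\<forall>g\<in>A. \<tau> (cod G g) * \<rho>1 g = \<rho>2 g * \<tau> (dom G g))"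

definition reps_iso :: "('o, 'm) groupoid \<Rightarrow> 'm set \<Rightarrow> ('o \<Rightarrow> nat) \<Rightarrow> ('m \<Rightarrow> complex mat)
    \<Rightarrow> ('o \<Rightarrow> nat) \<Rightarrow> ('m \<Rightarrow> complex mat) \<Rightarrow> bool" where
  "reps_iso G A d1 \<rho>1 d2 \<rho>2 \<longleftrightarrow>
     (\<exists>\<tau>. is_nat_trans G A d1 \<rho>1 d2 \<rho>2 \<tau> \<and> (\<forall>x\<in>Obj G. invertible_mat (\<tau> x)))"

definition tri_dim :: "'o \<Rightarrow> nat" where "tri_dim x = 1"
definition tri_mat :: "'m \<Rightarrow> complex mat" where "tri_mat g = 1\<^sub>m 1"

text \<open>Induction = left adjoint of restriction along H -> G.  Pointwise, (d, rho) with
  unit eta : V -> Res (d, rho) is Ind V iff it is a universal arrow from V to the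
  restriction functor: every H-map f : V -> Res W factors uniquely as
  Res phi o eta with phi : (d, rho) -> W a G-map.\<close>
definition is_induced_rep :: "('o, 'm) groupoid \<Rightarrow> 'm set \<Rightarrow> ('o \<Rightarrow> nat) \<Rightarrow> ('m \<Rightarrow> complex mat)
    \<Rightarrow> ('o \<Rightarrow> nat) \<Rightarrow> ('m \<Rightarrow> complex mat) \<Rightarrow> ('o \<Rightarrow> complex mat) \<Rightarrow> bool" where
  "is_induced_rep G S d0 \<rho>0 d \<rho> \<eta> \<longleftrightarrow>
     is_rep G (Arr G) d \<rho> \<and> is_nat_trans G S d0 \<rho>0 d \<rho> \<eta> \<and>
     (\<forall>(d' :: 'o \<Rightarrow> nat) (\<rho>' :: 'm \<Rightarrow> complex mat) f.
        is_rep G (Arr G) d' \<rho>' \<longrightarrow> is_nat_trans G S d0 \<rho>0 d' \<rho>' f \<longrightarrow>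
        (\<exists>\<phi>. is_nat_trans G (Arr G) d \<rho> d' \<rho>' \<phi> \<and> (\<forall>x\<in>Obj G. \<phi> x * \<eta> x = f x) \<and>
           (\<forall>\<psi>. is_nat_trans G (Arr G) d \<rho> d' \<rho>' \<psi> \<and> (\<forall>x\<in>Obj G. \<psi> x * \<eta> x = f x)
                 \<longrightarrow> (\<forall>x\<in>Obj G. \<psi> x = \<phi> x))))"

text \<open>A chosen ordering of the basis G/H(x) of the free vector space C[G/H](x).\<close>
definition quot_enum :: "('o, 'm) groupoid \<Rightarrow> 'm set \<Rightarrow> 'o \<Rightarrow> nat \<Rightarrow> 'm set" where
  "quot_enum G S x = (SOME e. bij_betw e {..<card (quot_set G S x)} (quot_set G S x))"

definition lin_dim :: "('o, 'm) groupoid \<Rightarrow> 'm set \<Rightarrow> 'o \<Rightarrow> nat" where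
  "lin_dim G S x = card (quot_set G S x)"

text \<open>Matrix of F(g) : C[G/H(x)] -> C[G/H(y)] for g : x -> y in the chosen bases:
  the basis vector of class c goes to the basis vector of class gc.\<close>
definition lin_mat :: "('o, 'm) groupoid \<Rightarrow> 'm set \<Rightarrow> 'm \<Rightarrow> complex mat" where
  "lin_mat G S g = mat (lin_dim G S (cod G g)) (lin_dim G S (dom G g))
     (\<lambda>(i, j). if quot_enum G S (cod G g) i = quot_act G S g (quot_enum G S (dom G g) j)
               then 1 else 0)"

end

theory Submission
  imports Defs
begin

text \<open>For a representation W of G, an H-map Tri \<rightarrow> Res W is a family of vectors f(x) \<in> W(x)
  with W(s) f(dom s) = f(cod s) for every arrow s of H. Such a family extends to the G-map
  \<complex>[G/H] \<rightarrow> W sending aH to W(a) f(dom a): this is well defined precisely because f is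
  H-invariant, and it is the only extension because every class aH is the image of the class
  of the identity of dom a under a. So \<complex>[G/H], with unit x \<mapsto> (class of the identity of x),
  has the universal property of Ind Tri, and universal arrows are unique up to isomorphism.\<close>

section \<open>Matrices\<close>

lemma square_if_two_sided_inverse:
  fixes A B :: "'a :: {comm_semiring_1, semiring_char_0} mat"
  assumes A: "A \<in> carrier_mat m n" and B: "B \<in> carrier_mat n m"
    and AB: "A * B = 1\<^sub>m m" and BA: "B * A = 1\<^sub>m n"
  shows "m = n"
proof -
  have "(of_nat m :: 'a) = (\<Sum>i<m. (A * B) $$ (i, i))"
    by (simp add: AB)
  also have "\<dots> = (\<Sum>i<m. \<Sum>k<n. A $$ (i, k) * B $$ (k, i))"
    using A B by (intro sum.cong) (auto simp: scalar_prod_def atLeast0LessThan)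
  also have "\<dots> = (\<Sum>k<n. \<Sum>i<m. B $$ (k, i) * A $$ (i, k))"
    by (subst sum.swap) (simp add: mult.commute)
  also have "\<dots> = (\<Sum>k<n. (B * A) $$ (k, k))"
    using A B by (intro sum.cong) (auto simp: scalar_prod_def atLeast0LessThan)
  also have "\<dots> = of_nat n"
    by (simp add: BA)
  finally show ?thesis by simp
qed

text \<open>Vectors of \<complex>^n are n \<times> 1 matrices, as in the encoding of maps out of Tri.\<close>

definition unit_col :: "nat \<Rightarrow> nat \<Rightarrow> 'a :: zero_neq_one mat" where
  "unit_col n j = mat n 1 (\<lambda>(i, _). if i = j then 1 else 0)"

lemma unit_col_carrier [simp]: "unit_col n j \<in> carrier_mat n 1"
  by (simp add: unit_col_def)

lemma mult_unit_col:
  fixes A :: "'a :: semiring_1 mat"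
  assumes A: "A \<in> carrier_mat m n" and j: "j < n"
  shows "A * unit_col n j = mat m 1 (\<lambda>(i, _). A $$ (i, j))"
proof (rule eq_matI)
  fix i k assume "i < dim_row (mat m 1 (\<lambda>(i, _). A $$ (i, j)))"
    and "k < dim_col (mat m 1 (\<lambda>(i, _). A $$ (i, j)))"
  then have i: "i < m" and k: "k = 0" by auto
  have "(A * unit_col n j) $$ (i, k) = (\<Sum>l<n. if l = j then A $$ (i, l) else 0)"
    using A i k by (auto simp: unit_col_def scalar_prod_def atLeast0LessThan if_distrib cong: if_cong
        intro!: sum.cong)
  also have "\<dots> = A $$ (i, j)"
    using j by simp
  finally show "(A * unit_col n j) $$ (i, k) = mat m 1 (\<lambda>(i, _). A $$ (i, j)) $$ (i, k)"
    using i k by simp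
qed (use A in \<open>auto simp: unit_col_def\<close>)

lemma mat_eq_by_unit_cols:
  fixes A B :: "'a :: semiring_1 mat"
  assumes A: "A \<in> carrier_mat m n" and B: "B \<in> carrier_mat m n"
    and cols: "\<And>j. j < n \<Longrightarrow> A * unit_col n j = B * unit_col n j"
  shows "A = B"
proof (rule eq_matI)
  fix i j assume "i < dim_row B" "j < dim_col B"
  then have i: "i < m" and j: "j < n" using B by auto
  have "mat m 1 (\<lambda>(i, _). A $$ (i, j)) = mat m 1 (\<lambda>(i, _). B $$ (i, j))"
    using cols[OF j] by (simp add: mult_unit_col[OF A j] mult_unit_col[OF B j])
  then have "mat m 1 (\<lambda>(i, _). A $$ (i, j)) $$ (i, 0) = mat m 1 (\<lambda>(i, _). B $$ (i, j)) $$ (i, 0)"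
    by simp
  then show "A $$ (i, j) = B $$ (i, j)"
    using i by simp
qed (use A B in auto)

section \<open>Groupoids and induced representations\<close>

locale finite_groupoid =
  fixes G :: "('o, 'm) groupoid"
  assumes finite_groupoid: "is_finite_groupoid G"
begin

lemma finite_Arr: "finite (Arr G)"
  using finite_groupoid unfolding is_finite_groupoid_def by blast

lemma dom_in_Obj [simp]: "g \<in> Arr G \<Longrightarrow> dom G g \<in> Obj G"
  and cod_in_Obj [simp]: "g \<in> Arr G \<Longrightarrow> cod G g \<in> Obj G"
  using finite_groupoid unfolding is_finite_groupoid_def by blast+

lemma ide_in_Arr [simp]: "x \<in> Obj G \<Longrightarrow> ide G x \<in> Arr G"
  and dom_ide [simp]: "x \<in> Obj G \<Longrightarrow> dom G (ide G x) = x"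
  and cod_ide [simp]: "x \<in> Obj G \<Longrightarrow> cod G (ide G x) = x"
  using finite_groupoid unfolding is_finite_groupoid_def by blast+

lemma comp_in_Arr [simp]: "g \<in> Arr G \<Longrightarrow> h \<in> Arr G \<Longrightarrow> dom G g = cod G h \<Longrightarrow> comp G g h \<in> Arr G"
  and dom_comp [simp]: "g \<in> Arr G \<Longrightarrow> h \<in> Arr G \<Longrightarrow> dom G g = cod G h \<Longrightarrow> dom G (comp G g h) = dom G h"
  and cod_comp [simp]: "g \<in> Arr G \<Longrightarrow> h \<in> Arr G \<Longrightarrow> dom G g = cod G h \<Longrightarrow> cod G (comp G g h) = cod G g"
  using finite_groupoid unfolding is_finite_groupoid_def by blast+

lemma comp_assoc:
  "g \<in> Arr G \<Longrightarrow> h \<in> Arr G \<Longrightarrow> k \<in> Arr G \<Longrightarrow> dom G g = cod G h \<Longrightarrow> dom G h = cod G k \<Longrightarrow>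
   comp G (comp G g h) k = comp G g (comp G h k)"
  using finite_groupoid unfolding is_finite_groupoid_def by blast

lemma comp_ide_left [simp]: "g \<in> Arr G \<Longrightarrow> comp G (ide G (cod G g)) g = g"
  and comp_ide_right [simp]: "g \<in> Arr G \<Longrightarrow> comp G g (ide G (dom G g)) = g"
  using finite_groupoid unfolding is_finite_groupoid_def by blast+

lemma ginv_inverse:
  assumes g: "g \<in> Arr G"
  shows "ginv G g \<in> Arr G \<and> dom G (ginv G g) = cod G g \<and> cod G (ginv G g) = dom G g \<and>
    comp G (ginv G g) g = ide G (dom G g) \<and> comp G g (ginv G g) = ide G (cod G g)"
  unfolding ginv_def
proof (rule theI')
  let ?inverse = "\<lambda>h. h \<in> Arr G \<and> dom G h = cod G g \<and> cod G h = dom G g \<and>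
    comp G h g = ide G (dom G g) \<and> comp G g h = ide G (cod G g)"
  obtain h where h: "?inverse h"
    using finite_groupoid g unfolding is_finite_groupoid_def by blast
  have "h' = h" if h': "?inverse h'" for h'
  proof -
    have "h' = comp G h' (ide G (cod G g))"
      using h' comp_ide_right by metis
    also have "\<dots> = comp G h' (comp G g h)"
      using h by simp
    also have "\<dots> = comp G (comp G h' g) h"
      using h h' g comp_assoc by metis
    also have "\<dots> = comp G (ide G (dom G g)) h"
      using h' by simp
    also have "\<dots> = h"
      using h comp_ide_left by metis
    finally show ?thesis .
  qed
  with h show "\<exists>!h. ?inverse h" by blast
qed

lemma ginv_in_Arr [simp]: "g \<in> Arr G \<Longrightarrow> ginv G g \<in> Arr G"
  and dom_ginv [simp]: "g \<in> Arr G \<Longrightarrow> dom G (ginv G g) = cod G g"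
  and cod_ginv [simp]: "g \<in> Arr G \<Longrightarrow> cod G (ginv G g) = dom G g"
  and comp_ginv_left [simp]: "g \<in> Arr G \<Longrightarrow> comp G (ginv G g) g = ide G (dom G g)"
  and comp_ginv_right [simp]: "g \<in> Arr G \<Longrightarrow> comp G g (ginv G g) = ide G (cod G g)"
  using ginv_inverse by blast+

lemma comp_ginv_comp [simp]:
  "a \<in> Arr G \<Longrightarrow> s \<in> Arr G \<Longrightarrow> cod G s = dom G a \<Longrightarrow> comp G (ginv G a) (comp G a s) = s"
  using comp_assoc[of "ginv G a" a s] comp_ide_left[of s] by simp

lemma comp_comp_ginv [simp]:
  "a \<in> Arr G \<Longrightarrow> b \<in> Arr G \<Longrightarrow> cod G b = cod G a \<Longrightarrow> comp G a (comp G (ginv G a) b) = b"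
  using comp_assoc[of a "ginv G a" b] comp_ide_left[of b] by simp

lemma nat_trans_comp:
  assumes R1: "is_rep G (Arr G) d1 \<rho>1" and R2: "is_rep G (Arr G) d2 \<rho>2" and R3: "is_rep G (Arr G) d3 \<rho>3"
    and \<alpha>: "is_nat_trans G (Arr G) d1 \<rho>1 d2 \<rho>2 \<alpha>" and \<beta>: "is_nat_trans G (Arr G) d2 \<rho>2 d3 \<rho>3 \<beta>"
  shows "is_nat_trans G (Arr G) d1 \<rho>1 d3 \<rho>3 (\<lambda>x. \<beta> x * \<alpha> x)"
  unfolding is_nat_trans_def
proof (intro conjI ballI)
  fix x assume "x \<in> Obj G"
  then show "\<beta> x * \<alpha> x \<in> carrier_mat (d3 x) (d1 x)"
    using \<alpha> \<beta> unfolding is_nat_trans_def by auto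
next
  fix g assume g: "g \<in> Arr G"
  let ?x = "dom G g" and ?y = "cod G g"
  have carriers: "\<alpha> ?x \<in> carrier_mat (d2 ?x) (d1 ?x)" "\<alpha> ?y \<in> carrier_mat (d2 ?y) (d1 ?y)"
    "\<beta> ?x \<in> carrier_mat (d3 ?x) (d2 ?x)" "\<beta> ?y \<in> carrier_mat (d3 ?y) (d2 ?y)"
    "\<rho>1 g \<in> carrier_mat (d1 ?y) (d1 ?x)" "\<rho>2 g \<in> carrier_mat (d2 ?y) (d2 ?x)"
    "\<rho>3 g \<in> carrier_mat (d3 ?y) (d3 ?x)"
    using \<alpha> \<beta> R1 R2 R3 g unfolding is_nat_trans_def is_rep_def by auto
  have \<alpha>_nat: "\<alpha> ?y * \<rho>1 g = \<rho>2 g * \<alpha> ?x" and \<beta>_nat: "\<beta> ?y * \<rho>2 g = \<rho>3 g * \<beta> ?x"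
    using \<alpha> \<beta> g unfolding is_nat_trans_def by auto
  have "\<beta> ?y * \<alpha> ?y * \<rho>1 g = \<beta> ?y * (\<rho>2 g * \<alpha> ?x)"
    using carriers \<alpha>_nat by (simp add: assoc_mult_mat)
  also have "\<dots> = (\<beta> ?y * \<rho>2 g) * \<alpha> ?x"
    using carriers by (simp add: assoc_mult_mat)
  also have "\<dots> = \<rho>3 g * (\<beta> ?x * \<alpha> ?x)"
    using carriers \<beta>_nat by (simp add: assoc_mult_mat)
  finally show "\<beta> ?y * \<alpha> ?y * \<rho>1 g = \<rho>3 g * (\<beta> ?x * \<alpha> ?x)" .
qed

lemma nat_trans_id:
  assumes "is_rep G (Arr G) d \<rho>"
  shows "is_nat_trans G (Arr G) d \<rho> d \<rho> (\<lambda>x. 1\<^sub>m (d x))"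
  using assms unfolding is_nat_trans_def is_rep_def by auto

lemma induced_rep_endo_eq_id:
  assumes I: "is_induced_rep G S d0 \<rho>0 d \<rho> \<eta>"
    and \<alpha>: "is_nat_trans G (Arr G) d \<rho> d \<rho> \<alpha>" and \<alpha>\<eta>: "\<forall>x\<in>Obj G. \<alpha> x * \<eta> x = \<eta> x"
    and x: "x \<in> Obj G"
  shows "\<alpha> x = 1\<^sub>m (d x)"
proof -
  have R: "is_rep G (Arr G) d \<rho>" and N: "is_nat_trans G S d0 \<rho>0 d \<rho> \<eta>"
    using I unfolding is_induced_rep_def by auto
  obtain \<phi> where unique: "\<And>\<psi>. is_nat_trans G (Arr G) d \<rho> d \<rho> \<psi> \<Longrightarrow> \<forall>x\<in>Obj G. \<psi> x * \<eta> x = \<eta> x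
      \<Longrightarrow> \<forall>x\<in>Obj G. \<psi> x = \<phi> x"
    using I R N unfolding is_induced_rep_def by metis
  have "\<forall>x\<in>Obj G. 1\<^sub>m (d x) * \<eta> x = \<eta> x"
    using N unfolding is_nat_trans_def by auto
  then show ?thesis
    using unique[OF \<alpha> \<alpha>\<eta>] unique[OF nat_trans_id[OF R]] x by simp
qed

lemma induced_rep_unique:
  assumes I1: "is_induced_rep G S d0 \<rho>0 d1 \<rho>1 \<eta>1" and I2: "is_induced_rep G S d0 \<rho>0 d2 \<rho>2 \<eta>2"
  shows "reps_iso G (Arr G) d1 \<rho>1 d2 \<rho>2"
proof -
  have R1: "is_rep G (Arr G) d1 \<rho>1" and N1: "is_nat_trans G S d0 \<rho>0 d1 \<rho>1 \<eta>1"
    and R2: "is_rep G (Arr G) d2 \<rho>2" and N2: "is_nat_trans G S d0 \<rho>0 d2 \<rho>2 \<eta>2"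
    using I1 I2 unfolding is_induced_rep_def by auto
  obtain \<alpha> where \<alpha>: "is_nat_trans G (Arr G) d1 \<rho>1 d2 \<rho>2 \<alpha>" and \<alpha>\<eta>: "\<forall>x\<in>Obj G. \<alpha> x * \<eta>1 x = \<eta>2 x"
    using I1 R2 N2 unfolding is_induced_rep_def by blast
  obtain \<beta> where \<beta>: "is_nat_trans G (Arr G) d2 \<rho>2 d1 \<rho>1 \<beta>" and \<beta>\<eta>: "\<forall>x\<in>Obj G. \<beta> x * \<eta>2 x = \<eta>1 x"
    using I2 R1 N1 unfolding is_induced_rep_def by blast
  have "invertible_mat (\<alpha> x)" if x: "x \<in> Obj G" for x
  proof -
    have carriers: "\<alpha> x \<in> carrier_mat (d2 x) (d1 x)" "\<beta> x \<in> carrier_mat (d1 x) (d2 x)"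
      using \<alpha> \<beta> x unfolding is_nat_trans_def by auto
    have "\<beta> y * \<alpha> y * \<eta>1 y = \<eta>1 y \<and> \<alpha> y * \<beta> y * \<eta>2 y = \<eta>2 y" if y: "y \<in> Obj G" for y
    proof -
      have "\<alpha> y \<in> carrier_mat (d2 y) (d1 y)" "\<beta> y \<in> carrier_mat (d1 y) (d2 y)"
        "\<eta>1 y \<in> carrier_mat (d1 y) (d0 y)" "\<eta>2 y \<in> carrier_mat (d2 y) (d0 y)"
        using \<alpha> \<beta> N1 N2 y unfolding is_nat_trans_def by auto
      then show ?thesis
        using \<alpha>\<eta> \<beta>\<eta> y by (simp add: assoc_mult_mat)
    qed
    then have "\<beta> x * \<alpha> x = 1\<^sub>m (d1 x)" "\<alpha> x * \<beta> x = 1\<^sub>m (d2 x)"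
      using induced_rep_endo_eq_id[OF I1 nat_trans_comp[OF R1 R2 R1 \<alpha> \<beta>]]
        induced_rep_endo_eq_id[OF I2 nat_trans_comp[OF R2 R1 R2 \<beta> \<alpha>]] x by auto
    moreover have "d2 x = d1 x"
      using square_if_two_sided_inverse carriers calculation by blast
    ultimately show ?thesis
      using carriers unfolding invertible_mat_def inverts_mat_def by auto
  qed
  then show ?thesis
    unfolding reps_iso_def using \<alpha> by blast
qed

end

section \<open>The linearization of G/H\<close>

locale wide_subgroupoid = finite_groupoid G for G :: "('o, 'm) groupoid" +
  fixes S :: "'m set"
  assumes wide: "is_wide_subgroupoid G S"
begin

lemma S_in_Arr: "s \<in> S \<Longrightarrow> s \<in> Arr G"
  and ide_in_S: "x \<in> Obj G \<Longrightarrow> ide G x \<in> S"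
  and comp_in_S: "s \<in> S \<Longrightarrow> t \<in> S \<Longrightarrow> dom G s = cod G t \<Longrightarrow> comp G s t \<in> S"
  and ginv_in_S: "s \<in> S \<Longrightarrow> ginv G s \<in> S"
  using wide unfolding is_wide_subgroupoid_def is_subgroupoid_def by blast+

definition coset :: "'m \<Rightarrow> 'm set" where
  "coset a = left_class G S (cod G a) a"

lemma mem_coset_iff:
  assumes a: "a \<in> Arr G"
  shows "b \<in> coset a \<longleftrightarrow> (\<exists>s\<in>S. cod G s = dom G a \<and> b = comp G a s)"
proof
  assume "b \<in> coset a"
  then have b: "b \<in> Arr G" "cod G b = cod G a" and s: "comp G (ginv G a) b \<in> S"
    unfolding coset_def left_class_def Mor_to_def by auto
  have "b = comp G a (comp G (ginv G a) b)"
    using a b by simp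
  moreover have "cod G (comp G (ginv G a) b) = dom G a"
    using a b by simp
  ultimately show "\<exists>s\<in>S. cod G s = dom G a \<and> b = comp G a s"
    using s by blast
next
  assume "\<exists>s\<in>S. cod G s = dom G a \<and> b = comp G a s"
  then obtain s where s: "s \<in> S" "cod G s = dom G a" and b: "b = comp G a s"
    by blast
  with a S_in_Arr[OF s(1)] show "b \<in> coset a"
    unfolding coset_def left_class_def Mor_to_def by simp
qed

lemma coset_self: "a \<in> Arr G \<Longrightarrow> a \<in> coset a"
  using ide_in_S[of "dom G a"] by (auto simp: mem_coset_iff intro!: bexI[of _ "ide G (dom G a)"])

lemma coset_comp_S:
  assumes a: "a \<in> Arr G" and s: "s \<in> S" "cod G s = dom G a"
  shows "coset (comp G a s) = coset a"
proof (rule Set.set_eqI)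
  have sA: "s \<in> Arr G"
    using S_in_Arr[OF s(1)] .
  fix b
  have "(\<exists>t\<in>S. cod G t = dom G s \<and> b = comp G (comp G a s) t) \<longleftrightarrow>
        (\<exists>u\<in>S. cod G u = dom G a \<and> b = comp G a u)"
  proof
    assume "\<exists>t\<in>S. cod G t = dom G s \<and> b = comp G (comp G a s) t"
    then obtain t where t: "t \<in> S" "cod G t = dom G s" "b = comp G (comp G a s) t"
      by blast
    then have "b = comp G a (comp G s t)" "comp G s t \<in> S" "cod G (comp G s t) = dom G a"
      using a sA s S_in_Arr comp_in_S comp_assoc by simp_all
    then show "\<exists>u\<in>S. cod G u = dom G a \<and> b = comp G a u"
      by blast
  next
    assume "\<exists>u\<in>S. cod G u = dom G a \<and> b = comp G a u"
    then obtain u where u: "u \<in> S" "cod G u = dom G a" "b = comp G a u"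
      by blast
    then have "b = comp G (comp G a s) (comp G (ginv G s) u)"
      using a sA s S_in_Arr comp_assoc by simp
    moreover have "comp G (ginv G s) u \<in> S" "cod G (comp G (ginv G s) u) = dom G s"
      using sA s u S_in_Arr ginv_in_S comp_in_S by simp_all
    ultimately show "\<exists>t\<in>S. cod G t = dom G s \<and> b = comp G (comp G a s) t"
      by blast
  qed
  then show "b \<in> coset (comp G a s) \<longleftrightarrow> b \<in> coset a"
    using a sA s by (simp add: mem_coset_iff)
qed

lemma coset_comp_left:
  assumes g: "g \<in> Arr G" and a: "a \<in> Arr G" "dom G g = cod G a" and b: "b \<in> coset a"
  shows "coset (comp G g b) = coset (comp G g a)"
proof -
  obtain s where s: "s \<in> S" "cod G s = dom G a" "b = comp G a s"
    using b mem_coset_iff[OF a(1)] by blast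
  then have "comp G g b = comp G (comp G g a) s"
    using g a S_in_Arr comp_assoc by simp
  then show ?thesis
    using g a s coset_comp_S by simp
qed

lemma quot_set_eq: "quot_set G S x = coset ` Mor_to G x"
  unfolding quot_set_def coset_def Mor_to_def by auto

lemma finite_quot_set: "finite (quot_set G S x)"
  unfolding quot_set_eq Mor_to_def using finite_Arr by simp

lemma coset_in_quot_set: "a \<in> Arr G \<Longrightarrow> coset a \<in> quot_set G S (cod G a)"
  unfolding quot_set_eq Mor_to_def by auto

lemma quot_set_cases:
  assumes "c \<in> quot_set G S x"
  obtains a where "a \<in> Arr G" "cod G a = x" "c = coset a"
  using assms unfolding quot_set_eq Mor_to_def by blast

lemma quot_act_coset:
  assumes g: "g \<in> Arr G" and a: "a \<in> Arr G" "dom G g = cod G a"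
  shows "quot_act G S g (coset a) = coset (comp G g a)"
proof -
  define b where "b = (SOME b. b \<in> coset a)"
  have b: "b \<in> coset a"
    unfolding b_def using coset_self[OF a(1)] by (rule someI)
  then have "b \<in> Arr G" "cod G b = cod G a"
    using mem_coset_iff[OF a(1)] a S_in_Arr by auto
  then have "quot_act G S g (coset a) = coset (comp G g b)"
    using g a unfolding quot_act_def b_def by (simp add: coset_def)
  then show ?thesis
    using coset_comp_left[OF g a b] by simp
qed

lemma quot_act_in_quot_set:
  assumes g: "g \<in> Arr G" and c: "c \<in> quot_set G S (dom G g)"
  shows "quot_act G S g c \<in> quot_set G S (cod G g)"
proof -
  obtain a where "a \<in> Arr G" "dom G g = cod G a" "c = coset a"
    using c by (rule quot_set_cases) simp
  then show ?thesis
    using g coset_in_quot_set[of "comp G g a"] by (simp add: quot_act_coset)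
qed

lemma quot_act_ide:
  assumes c: "c \<in> quot_set G S x"
  shows "quot_act G S (ide G x) c = c"
proof -
  obtain a where "a \<in> Arr G" "x = cod G a" "c = coset a"
    using c by (rule quot_set_cases) simp
  then show ?thesis
    by (simp add: quot_act_coset)
qed

lemma quot_act_comp:
  assumes g: "g \<in> Arr G" and h: "h \<in> Arr G" "dom G g = cod G h"
    and c: "c \<in> quot_set G S (dom G h)"
  shows "quot_act G S (comp G g h) c = quot_act G S g (quot_act G S h c)"
proof -
  obtain a where "a \<in> Arr G" "dom G h = cod G a" "c = coset a"
    using c by (rule quot_set_cases) simp
  then show ?thesis
    using g h comp_assoc[of g h a] by (simp add: quot_act_coset)
qed

lemma quot_enum_bij: "bij_betw (quot_enum G S x) {..<lin_dim G S x} (quot_set G S x)"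
proof -
  have "\<exists>e. bij_betw e {..<card (quot_set G S x)} (quot_set G S x)"
    using ex_bij_betw_nat_finite[OF finite_quot_set] by (simp add: lessThan_atLeast0)
  then show ?thesis
    unfolding quot_enum_def lin_dim_def by (rule someI_ex)
qed

definition coset_idx :: "'o \<Rightarrow> 'm set \<Rightarrow> nat" where
  "coset_idx x c = the_inv_into {..<lin_dim G S x} (quot_enum G S x) c"

lemma quot_enum_in: "j < lin_dim G S x \<Longrightarrow> quot_enum G S x j \<in> quot_set G S x"
  using quot_enum_bij[of x] by (auto dest: bij_betwE)

lemma coset_idx_less: "c \<in> quot_set G S x \<Longrightarrow> coset_idx x c < lin_dim G S x"
  using quot_enum_bij[of x] unfolding coset_idx_def bij_betw_def
  by (auto intro!: the_inv_into_into[where B = "{..<lin_dim G S x}", simplified])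

lemma quot_enum_coset_idx: "c \<in> quot_set G S x \<Longrightarrow> quot_enum G S x (coset_idx x c) = c"
  using quot_enum_bij[of x] unfolding coset_idx_def bij_betw_def by (auto intro!: f_the_inv_into_f)

lemma coset_idx_quot_enum: "j < lin_dim G S x \<Longrightarrow> coset_idx x (quot_enum G S x j) = j"
  using quot_enum_bij[of x] unfolding coset_idx_def bij_betw_def by (auto intro!: the_inv_into_f_f)

definition basis_col :: "'o \<Rightarrow> 'm set \<Rightarrow> complex mat" where
  "basis_col x c = unit_col (lin_dim G S x) (coset_idx x c)"

lemma basis_col_carrier [simp]: "basis_col x c \<in> carrier_mat (lin_dim G S x) 1"
  unfolding basis_col_def by (rule unit_col_carrier)

lemma mat_eq_by_basis_cols:
  assumes "A \<in> carrier_mat m (lin_dim G S x)" "B \<in> carrier_mat m (lin_dim G S x)"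
    and "\<And>c. c \<in> quot_set G S x \<Longrightarrow> A * basis_col x c = B * basis_col x c"
  shows "A = B"
  using assms quot_enum_in coset_idx_quot_enum
  by (intro mat_eq_by_unit_cols[OF assms(1,2)]) (metis basis_col_def)

lemma lin_mat_carrier [simp]: "lin_mat G S g \<in> carrier_mat (lin_dim G S (cod G g)) (lin_dim G S (dom G g))"
  by (simp add: lin_mat_def)

lemma lin_mat_basis_col:
  assumes g: "g \<in> Arr G" and c: "c \<in> quot_set G S (dom G g)"
  shows "lin_mat G S g * basis_col (dom G g) c = basis_col (cod G g) (quot_act G S g c)"
proof -
  let ?y = "cod G g"
  have gc: "quot_act G S g c \<in> quot_set G S ?y"
    using quot_act_in_quot_set[OF g c] .
  have enum_iff: "quot_enum G S ?y i = quot_act G S g c \<longleftrightarrow> i = coset_idx ?y (quot_act G S g c)"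
    if "i < lin_dim G S ?y" for i
    using that gc quot_enum_coset_idx coset_idx_quot_enum by metis
  have "lin_mat G S g * basis_col (dom G g) c =
      mat (lin_dim G S ?y) 1 (\<lambda>(i, _). lin_mat G S g $$ (i, coset_idx (dom G g) c))"
    unfolding basis_col_def by (rule mult_unit_col[OF lin_mat_carrier coset_idx_less[OF c]])
  also have "\<dots> = basis_col ?y (quot_act G S g c)"
    unfolding basis_col_def unit_col_def
    by (rule eq_matI) (simp_all add: lin_mat_def coset_idx_less[OF c] quot_enum_coset_idx[OF c] enum_iff)
  finally show ?thesis .
qed

lemma lin_is_rep: "is_rep G (Arr G) (lin_dim G S) (lin_mat G S)"
  unfolding is_rep_def
proof (intro conjI ballI impI)
  fix x assume x: "x \<in> Obj G"
  have cols: "lin_mat G S (ide G x) * basis_col x c = 1\<^sub>m (lin_dim G S x) * basis_col x c"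
    if c: "c \<in> quot_set G S x" for c
    using lin_mat_basis_col[of "ide G x" c] x c left_mult_one_mat[OF basis_col_carrier]
    by (simp add: quot_act_ide)
  have "lin_mat G S (ide G x) \<in> carrier_mat (lin_dim G S x) (lin_dim G S x)"
    using lin_mat_carrier[of "ide G x"] x by simp
  then show "lin_mat G S (ide G x) = 1\<^sub>m (lin_dim G S x)"
    using one_carrier_mat cols by (rule mat_eq_by_basis_cols)
next
  fix g h assume g: "g \<in> Arr G" and h: "h \<in> Arr G" and gh: "dom G g = cod G h"
  let ?x = "dom G h" and ?z = "cod G g"
  have carriers: "lin_mat G S (comp G g h) \<in> carrier_mat (lin_dim G S ?z) (lin_dim G S ?x)"
    "lin_mat G S g * lin_mat G S h \<in> carrier_mat (lin_dim G S ?z) (lin_dim G S ?x)"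
    using lin_mat_carrier[of "comp G g h"] lin_mat_carrier[of g] lin_mat_carrier[of h] g h gh by auto
  have cols: "lin_mat G S (comp G g h) * basis_col ?x c = lin_mat G S g * lin_mat G S h * basis_col ?x c"
    if c: "c \<in> quot_set G S ?x" for c
  proof -
    have "lin_mat G S g * lin_mat G S h * basis_col ?x c = lin_mat G S g * (lin_mat G S h * basis_col ?x c)"
      using lin_mat_carrier[of g] gh by (intro assoc_mult_mat[OF _ lin_mat_carrier basis_col_carrier]) simp
    also have "\<dots> = basis_col ?z (quot_act G S g (quot_act G S h c))"
      using lin_mat_basis_col[OF h c] lin_mat_basis_col[OF g, of "quot_act G S h c"]
        quot_act_in_quot_set[OF h c] gh by simp
    also have "\<dots> = lin_mat G S (comp G g h) * basis_col ?x c"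
      using lin_mat_basis_col[of "comp G g h" c] quot_act_comp[OF g h gh c] g h gh c by simp
    finally show ?thesis by simp
  qed
  show "lin_mat G S (comp G g h) = lin_mat G S g * lin_mat G S h"
    using carriers cols by (rule mat_eq_by_basis_cols)
qed simp

definition lin_unit :: "'o \<Rightarrow> complex mat" where
  "lin_unit x = basis_col x (coset (ide G x))"

lemma lin_mat_lin_unit:
  assumes a: "a \<in> Arr G"
  shows "lin_mat G S a * lin_unit (dom G a) = basis_col (cod G a) (coset a)"
  using a coset_in_quot_set[of "ide G (dom G a)"]
  by (simp add: lin_unit_def lin_mat_basis_col quot_act_coset)

lemma lin_unit_nat_trans: "is_nat_trans G S tri_dim tri_mat (lin_dim G S) (lin_mat G S) lin_unit"
  unfolding is_nat_trans_def
proof (intro conjI ballI)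
  fix s assume s: "s \<in> S"
  then have "coset (comp G (ide G (cod G s)) s) = coset (ide G (cod G s))"
    using S_in_Arr by (intro coset_comp_S) simp_all
  then have "lin_unit (cod G s) = basis_col (cod G s) (coset s)"
    using s S_in_Arr by (simp add: lin_unit_def)
  then show "lin_unit (cod G s) * tri_mat s = lin_mat G S s * lin_unit (dom G s)"
    using s S_in_Arr right_mult_one_mat[OF basis_col_carrier]
    by (simp add: tri_mat_def lin_mat_lin_unit lin_unit_def[of "cod G s"])
qed (use basis_col_carrier in \<open>simp add: lin_unit_def tri_dim_def\<close>)

end

section \<open>The universal property\<close>

locale invariant_family = wide_subgroupoid G S for G :: "('o, 'm) groupoid" and S +
  fixes d :: "'o \<Rightarrow> nat" and \<rho> :: "'m \<Rightarrow> complex mat" and f :: "'o \<Rightarrow> complex mat"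
  assumes rep: "is_rep G (Arr G) d \<rho>"
    and invariant: "is_nat_trans G S tri_dim tri_mat d \<rho> f"
begin

lemma rep_carrier [simp]: "g \<in> Arr G \<Longrightarrow> \<rho> g \<in> carrier_mat (d (cod G g)) (d (dom G g))"
  and rep_ide [simp]: "x \<in> Obj G \<Longrightarrow> \<rho> (ide G x) = 1\<^sub>m (d x)"
  and rep_comp: "g \<in> Arr G \<Longrightarrow> h \<in> Arr G \<Longrightarrow> dom G g = cod G h \<Longrightarrow> \<rho> (comp G g h) = \<rho> g * \<rho> h"
  using rep unfolding is_rep_def by auto

lemma family_carrier [simp]: "x \<in> Obj G \<Longrightarrow> f x \<in> carrier_mat (d x) 1"
  using invariant unfolding is_nat_trans_def tri_dim_def by auto

lemma family_invariant: "s \<in> S \<Longrightarrow> \<rho> s * f (dom G s) = f (cod G s)"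
  using invariant S_in_Arr right_mult_one_mat[OF family_carrier[of "cod G s"]]
  unfolding is_nat_trans_def tri_mat_def by (metis cod_in_Obj)

definition transport :: "'m \<Rightarrow> complex mat" where
  "transport a = \<rho> a * f (dom G a)"

lemma transport_carrier: "a \<in> Arr G \<Longrightarrow> transport a \<in> carrier_mat (d (cod G a)) 1"
  unfolding transport_def by (rule mult_carrier_mat[OF rep_carrier family_carrier]) simp_all

lemma transport_comp:
  assumes g: "g \<in> Arr G" and a: "a \<in> Arr G" "dom G g = cod G a"
  shows "transport (comp G g a) = \<rho> g * transport a"
proof -
  have "\<rho> g \<in> carrier_mat (d (cod G g)) (d (cod G a))"
    using g a rep_carrier[OF g] by simp
  then show ?thesis
    using g a unfolding transport_def
    by (simp add: rep_comp assoc_mult_mat[OF _ rep_carrier[OF a(1)] family_carrier])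
qed

lemma transport_ide: "x \<in> Obj G \<Longrightarrow> transport (ide G x) = f x"
  using left_mult_one_mat[OF family_carrier] by (simp add: transport_def)

lemma transport_coset:
  assumes a: "a \<in> Arr G" and b: "b \<in> coset a"
  shows "transport b = transport a"
proof -
  obtain s where s: "s \<in> S" "cod G s = dom G a" and b_eq: "b = comp G a s"
    using b mem_coset_iff[OF a] by blast
  have "transport b = \<rho> a * transport s"
    using a s S_in_Arr b_eq by (simp add: transport_comp)
  also have "transport s = f (dom G a)"
    using s family_invariant by (simp add: transport_def)
  finally show ?thesis
    by (simp add: transport_def)
qed

definition coset_transport :: "'m set \<Rightarrow> complex mat" where
  "coset_transport c = transport (SOME a. a \<in> c)"

lemma coset_transport_coset: "a \<in> Arr G \<Longrightarrow> coset_transport (coset a) = transport a"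
  unfolding coset_transport_def using coset_self by (metis someI transport_coset)

definition lift :: "'o \<Rightarrow> complex mat" where
  "lift x = mat (d x) (lin_dim G S x) (\<lambda>(i, j). coset_transport (quot_enum G S x j) $$ (i, 0))"

lemma lift_carrier [simp]: "lift x \<in> carrier_mat (d x) (lin_dim G S x)"
  by (simp add: lift_def)

lemma lift_basis_col:
  assumes a: "a \<in> Arr G"
  shows "lift (cod G a) * basis_col (cod G a) (coset a) = transport a"
proof -
  let ?x = "cod G a"
  have c: "coset a \<in> quot_set G S ?x"
    using coset_in_quot_set[OF a] .
  have "lift ?x * basis_col ?x (coset a) = mat (d ?x) 1 (\<lambda>(i, _). lift ?x $$ (i, coset_idx ?x (coset a)))"
    unfolding basis_col_def by (rule mult_unit_col[OF lift_carrier coset_idx_less[OF c]])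
  also have "\<dots> = mat (d ?x) 1 (\<lambda>(i, _). transport a $$ (i, 0))"
    by (rule eq_matI) (simp_all add: lift_def coset_idx_less[OF c] quot_enum_coset_idx[OF c]
        coset_transport_coset[OF a])
  also have "\<dots> = transport a"
    using transport_carrier[OF a] by (intro eq_matI) auto
  finally show ?thesis .
qed

lemma lift_nat_trans: "is_nat_trans G (Arr G) (lin_dim G S) (lin_mat G S) d \<rho> lift"
  unfolding is_nat_trans_def
proof (intro conjI ballI)
  fix g assume g: "g \<in> Arr G"
  let ?x = "dom G g" and ?y = "cod G g"
  have cols: "lift ?y * lin_mat G S g * basis_col ?x c = \<rho> g * lift ?x * basis_col ?x c"
    if c: "c \<in> quot_set G S ?x" for c
  proof -
    obtain a where a: "a \<in> Arr G" "?x = cod G a" "c = coset a"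
      using c by (rule quot_set_cases) simp
    have "lift ?y * lin_mat G S g * basis_col ?x c = lift ?y * (lin_mat G S g * basis_col ?x c)"
      by (rule assoc_mult_mat[OF lift_carrier lin_mat_carrier basis_col_carrier])
    also have "\<dots> = transport (comp G g a)"
      using g a lin_mat_basis_col[OF g c] lift_basis_col[of "comp G g a"] by (simp add: quot_act_coset)
    also have "\<dots> = \<rho> g * (lift ?x * basis_col ?x c)"
      using g a lift_basis_col[of a] by (simp add: transport_comp)
    also have "\<dots> = \<rho> g * lift ?x * basis_col ?x c"
      by (rule assoc_mult_mat[OF rep_carrier[OF g] lift_carrier basis_col_carrier, symmetric])
    finally show ?thesis .
  qed
  show "lift ?y * lin_mat G S g = \<rho> g * lift ?x"
    using mult_carrier_mat[OF lift_carrier lin_mat_carrier] mult_carrier_mat[OF rep_carrier[OF g] lift_carrier]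
      cols by (rule mat_eq_by_basis_cols)
qed simp

lemma lift_lin_unit: "x \<in> Obj G \<Longrightarrow> lift x * lin_unit x = f x"
  using lift_basis_col[of "ide G x"] by (simp add: lin_unit_def transport_ide)

lemma lift_unique:
  assumes \<psi>: "is_nat_trans G (Arr G) (lin_dim G S) (lin_mat G S) d \<rho> \<psi>"
    and \<psi>_unit: "\<forall>x\<in>Obj G. \<psi> x * lin_unit x = f x"
    and x: "x \<in> Obj G"
  shows "\<psi> x = lift x"
proof -
  have \<psi>_carrier: "\<psi> y \<in> carrier_mat (d y) (lin_dim G S y)" if "y \<in> Obj G" for y
    using \<psi> that unfolding is_nat_trans_def by blast
  have cols: "\<psi> x * basis_col x c = lift x * basis_col x c" if c: "c \<in> quot_set G S x" for c
  proof -
    obtain a where a: "a \<in> Arr G" "x = cod G a" "c = coset a"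
      using c by (rule quot_set_cases) simp
    let ?y = "dom G a"
    have "\<psi> x * basis_col x c = \<psi> x * (lin_mat G S a * lin_unit ?y)"
      using a by (simp add: lin_mat_lin_unit)
    also have "\<dots> = \<psi> x * lin_mat G S a * lin_unit ?y"
      using a \<psi>_carrier[of x] unfolding lin_unit_def
      by (simp add: assoc_mult_mat[OF _ lin_mat_carrier basis_col_carrier])
    also have "\<dots> = \<rho> a * \<psi> ?y * lin_unit ?y"
      using \<psi> a unfolding is_nat_trans_def by simp
    also have "\<dots> = \<rho> a * f ?y"
      using a \<psi>_unit unfolding lin_unit_def
      by (simp add: assoc_mult_mat[OF rep_carrier[OF a(1)] \<psi>_carrier basis_col_carrier])
    also have "\<dots> = lift x * basis_col x c"
      using a lift_basis_col[of a] by (simp add: transport_def)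
    finally show ?thesis .
  qed
  show ?thesis
    using \<psi>_carrier[OF x] lift_carrier cols by (rule mat_eq_by_basis_cols)
qed

end

context wide_subgroupoid
begin

theorem lin_is_induced_rep: "is_induced_rep G S tri_dim tri_mat (lin_dim G S) (lin_mat G S) lin_unit"
  unfolding is_induced_rep_def
proof (intro conjI allI impI lin_is_rep lin_unit_nat_trans)
  fix d \<rho> f
  assume "is_rep G (Arr G) d \<rho>" and "is_nat_trans G S tri_dim tri_mat d \<rho> f"
  then interpret invariant_family G S d \<rho> f
    by unfold_locales
  show "\<exists>\<phi>. is_nat_trans G (Arr G) (lin_dim G S) (lin_mat G S) d \<rho> \<phi> \<and> (\<forall>x\<in>Obj G. \<phi> x * lin_unit x = f x) \<and>
      (\<forall>\<psi>. is_nat_trans G (Arr G) (lin_dim G S) (lin_mat G S) d \<rho> \<psi> \<and> (\<forall>x\<in>Obj G. \<psi> x * lin_unit x = f x)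
        \<longrightarrow> (\<forall>x\<in>Obj G. \<psi> x = \<phi> x))"
    using lift_nat_trans lift_lin_unit lift_unique by blast
qed

end

theorem theorem4p2:
  fixes G :: "('o, 'm) groupoid" and S :: "'m set"
  assumes "is_finite_groupoid G"
    and "is_wide_subgroupoid G S"
    and "is_connected_subgroupoid G S"
  shows "(\<exists>\<eta>. is_induced_rep G S tri_dim tri_mat (lin_dim G S) (lin_mat G S) \<eta>) \<and>
         (\<forall>d \<rho> \<eta>. is_induced_rep G S tri_dim tri_mat d \<rho> \<eta> \<longrightarrow>
            reps_iso G (Arr G) (lin_dim G S) (lin_mat G S) d \<rho>)"
proof -
  interpret wide_subgroupoid G S
    using assms(1,2) by unfold_locales
  show ?thesis
    using lin_is_induced_rep induced_rep_unique by blast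
qed

end
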